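(* Let $\mathcal P$ be a Poisson $n$-Lie algebra over an arbitrary field $\mathbb F$. For any $a\in\mathcal P$ and $\lambda\in\mathbb F$, the generalized eigenspace $$P_{a,\lambda}=\{x\in\mathcal P\mid (P_a-\lambda)^k(x)=0\text{ for some }k\in\mathbb N\}$$ is an ideal of $\mathcal P$, where $P_a(z)=a\cdot z$.
   Context: A Poisson $n$-Lie algebra is a commutative associative algebra $(\mathcal P,\cdot)$ with an $n$-linear skew-symmetric bracket satisfying the fundamental identity $[x_1,\dots,x_{n-1},[y_1,\dots,y_n]]=\sum_{i=1}^n[y_1,\dots,[x_1,\dots,x_{n-1},y_i],\dots,y_n]$ and the Leibniz rule $[y\cdot z,x_2,\dots,x_n]=y\cdot[z,x_2,\dots,x_n]+z\cdot[y,x_2,\dots,x_n]$. An ideal is a subspace $\mathcal I$ with $\mathcal P\cdot\mathcal I\subseteq\mathcal I$ and $[\mathcal I,\mathcal P,\dots,\mathcal P]\subseteq\mathcal I$ (linear spans). *)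

theory Defs
  imports Main "HOL.Vector_Spaces"
begin

text \<open>A Poisson n-Lie algebra over a field 'k: the underlying vector space is the type 'v
  with scalar multiplication sc; mul is the commutative associative (bilinear)
  multiplication; br is the n-ary bracket, applied to lists of length n.\<close>

definition poisson_nlie ::
  "('k::field \<Rightarrow> 'v::ab_group_add \<Rightarrow> 'v) \<Rightarrow> nat \<Rightarrow> ('v \<Rightarrow> 'v \<Rightarrow> 'v) \<Rightarrow> ('v list \<Rightarrow> 'v) \<Rightarrow> bool"
where
  "poisson_nlie sc n mul br \<longleftrightarrow>
     n \<ge> 2 \<and> vector_space sc \<and>
     \<comment> \<open>commutative associative algebra (bilinear product)\<close>
     (\<forall>x. Vector_Spaces.linear sc sc (mul x)) \<and>
     (\<forall>x y. mul x y = mul y x) \<and>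
     (\<forall>x y z. mul (mul x y) z = mul x (mul y z)) \<and>
     \<comment> \<open>n-linearity of the bracket\<close>
     (\<forall>xs i. length xs = n \<and> i < n \<longrightarrow> Vector_Spaces.linear sc sc (\<lambda>v. br (xs[i := v]))) \<and>
     \<comment> \<open>skew-symmetry\<close>
     (\<forall>xs i j. length xs = n \<and> i < n \<and> j < n \<and> i \<noteq> j \<longrightarrow>
        br (xs[i := xs ! j, j := xs ! i]) = - br xs) \<and>
     \<comment> \<open>fundamental identity\<close>
     (\<forall>xs ys. length xs = n - 1 \<and> length ys = n \<longrightarrow>
        br (xs @ [br ys]) = (\<Sum>i<n. br (ys[i := br (xs @ [ys ! i])]))) \<and>
     \<comment> \<open>Leibniz rule\<close>
     (\<forall>y z xs. length xs = n - 1 \<longrightarrow>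
        br (mul y z # xs) = mul y (br (z # xs)) + mul z (br (y # xs)))"

definition pn_ideal ::
  "('k::field \<Rightarrow> 'v::ab_group_add \<Rightarrow> 'v) \<Rightarrow> nat \<Rightarrow> ('v \<Rightarrow> 'v \<Rightarrow> 'v) \<Rightarrow> ('v list \<Rightarrow> 'v) \<Rightarrow> 'v set \<Rightarrow> bool"
where
  "pn_ideal sc n mul br I \<longleftrightarrow>
     module.subspace sc I \<and>
     (\<forall>x\<in>I. \<forall>y. mul y x \<in> I) \<and>
     (\<forall>x\<in>I. \<forall>ys. length ys = n - 1 \<longrightarrow> br (x # ys) \<in> I)"

definition gen_eigenspace ::
  "('k::field \<Rightarrow> 'v::ab_group_add \<Rightarrow> 'v) \<Rightarrow> ('v \<Rightarrow> 'v \<Rightarrow> 'v) \<Rightarrow> 'v \<Rightarrow> 'k \<Rightarrow> 'v set"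
where
  "gen_eigenspace sc mul a l = {x. \<exists>k::nat. ((\<lambda>z. mul a z - sc l z) ^^ k) x = 0}"

end

theory Submission
  imports Defs
begin

text \<open>Write \<open>T = P\<^sub>a - \<lambda>\<close>. Since the product is commutative and associative, \<open>T\<close> commutes with
  every multiplication operator, so its generalized kernel is closed under multiplication.
  For the bracket, \<open>D = [-, y\<^sub>2, \<dots>, y\<^sub>n]\<close> is a derivation by the Leibniz rule, hence
  \<open>D \<circ> T = T \<circ> D + P\<^bsub>D a\<^esub>\<close>; as \<open>P\<^bsub>D a\<^esub>\<close> again commutes with \<open>T\<close>, induction on \<open>k\<close> shows
  that \<open>T\<^sup>k x = 0\<close> implies \<open>T\<^bsup>k+1\<^esup> (D x) = 0\<close>.\<close>

definition gen_kernel :: "('v::zero \<Rightarrow> 'v) \<Rightarrow> 'v set" where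
  "gen_kernel f = {x. \<exists>k. (f ^^ k) x = 0}"

lemma linear_funpow:
  assumes "Vector_Spaces.linear s s f"
  shows "Vector_Spaces.linear s s (f ^^ k)"
proof (induction k)
  case 0
  interpret vector_space s
    using assms by (simp add: linear_iff)
  show ?case
    using linear_ident by simp
next
  case (Suc k)
  then show ?case
    using Vector_Spaces.linear_compose[OF Suc.IH assms] by (simp add: comp_def)
qed

lemma funpow_commute_apply:
  assumes "\<And>x. f (g x) = g (f x)"
  shows "(f ^^ k) (g x) = g ((f ^^ k) x)"
  by (induction k) (simp_all add: assms)

lemma subspace_gen_kernel:
  assumes "Vector_Spaces.linear s s f"
  shows "module.subspace s (gen_kernel f)"
proof -
  interpret vector_space s
    using assms by (simp add: linear_iff)
  have pow: "module_hom s s (f ^^ k)" for k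
    using linear_funpow[OF assms] by (simp add: module_hom_iff_linear)
  have kills_later: "(f ^^ (j + i)) x = 0" if "(f ^^ i) x = 0" for i j x
    using that module_hom.zero[OF pow] by (simp add: funpow_add)
  show ?thesis
  proof (rule subspaceI)
    show "0 \<in> gen_kernel f"
      by (auto simp: gen_kernel_def intro: exI[of _ 0])
  next
    fix x y assume "x \<in> gen_kernel f" "y \<in> gen_kernel f"
    then obtain i j where "(f ^^ i) x = 0" "(f ^^ j) y = 0"
      by (auto simp: gen_kernel_def)
    then have "(f ^^ (j + i)) (x + y) = 0"
      using kills_later[of i x j] kills_later[of j y i] module_hom.add[OF pow]
      by (simp add: add.commute)
    then show "x + y \<in> gen_kernel f"
      by (auto simp: gen_kernel_def)
  next
    fix c x assume "x \<in> gen_kernel f"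
    then obtain k where "(f ^^ k) x = 0"
      by (auto simp: gen_kernel_def)
    then have "(f ^^ k) (s c x) = 0"
      using module_hom.scale[OF pow] by simp
    then show "s c x \<in> gen_kernel f"
      by (auto simp: gen_kernel_def)
  qed
qed

lemma gen_kernel_closed_commuting:
  assumes "\<And>x. f (g x) = g (f x)" and "g 0 = 0" and "x \<in> gen_kernel f"
  shows "g x \<in> gen_kernel f"
proof -
  obtain k where "(f ^^ k) x = 0"
    using assms(3) by (auto simp: gen_kernel_def)
  then have "(f ^^ k) (g x) = 0"
    using funpow_commute_apply[of f g, OF assms(1)] assms(2) by simp
  then show ?thesis
    by (auto simp: gen_kernel_def)
qed

lemma gen_kernel_closed_commutator:
  assumes f: "Vector_Spaces.linear s s f" and d0: "d 0 = 0"
    and commutator: "\<And>z. d (f z) = f (d z) + c z"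
    and fc: "\<And>z. f (c z) = c (f z)"
    and x: "x \<in> gen_kernel f"
  shows "d x \<in> gen_kernel f"
proof -
  have pow: "module_hom s s (f ^^ k)" for k
    using linear_funpow[OF f] by (simp add: module_hom_iff_linear)
  have c0: "c 0 = 0"
    using commutator[of 0] d0 module_hom.zero[OF pow, of 1] by simp
  have kills: "(f ^^ Suc m) (d z) = 0" if "(f ^^ m) z = 0" for m z
    using that
  proof (induction m arbitrary: z)
    case 0
    then show ?case
      using d0 module_hom.zero[OF pow, of 1] by simp
  next
    case (Suc m)
    have "(f ^^ m) (f z) = 0"
      using Suc.prems by (simp add: funpow_swap1)
    then have IH: "(f ^^ Suc m) (d (f z)) = 0"
      by (rule Suc.IH)
    have "(f ^^ Suc (Suc m)) (d z) = (f ^^ Suc m) (d (f z) - c z)"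
      by (simp add: commutator funpow_Suc_right del: funpow.simps)
    also have "\<dots> = (f ^^ Suc m) (d (f z)) - c ((f ^^ Suc m) z)"
      by (simp only: module_hom.diff[OF pow] funpow_commute_apply[of f c, OF fc])
    also have "\<dots> = 0"
      using IH Suc.prems c0 by simp
    finally show ?case .
  qed
  obtain k where "(f ^^ k) x = 0"
    using x by (auto simp: gen_kernel_def)
  then show ?thesis
    using kills unfolding gen_kernel_def by blast
qed

lemma poisson_nlieD:
  assumes "poisson_nlie sc n mul br"
  shows poisson_nlie_vector_space: "vector_space sc"
    and poisson_nlie_linear_mul: "Vector_Spaces.linear sc sc (mul x)"
    and poisson_nlie_mul_commute: "mul x y = mul y x"
    and poisson_nlie_mul_assoc: "mul (mul x y) z = mul x (mul y z)"
    and poisson_nlie_linear_bracket: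
      "length ys = n - 1 \<Longrightarrow> Vector_Spaces.linear sc sc (\<lambda>v. br (v # ys))"
    and poisson_nlie_leibniz:
      "length ys = n - 1 \<Longrightarrow> br (mul y z # ys) = mul y (br (z # ys)) + mul z (br (y # ys))"
proof -
  note P = assms[unfolded poisson_nlie_def]
  show "vector_space sc" "Vector_Spaces.linear sc sc (mul x)" "mul x y = mul y x"
    "mul (mul x y) z = mul x (mul y z)"
    using P by blast+
  show "length ys = n - 1 \<Longrightarrow> br (mul y z # ys) = mul y (br (z # ys)) + mul z (br (y # ys))"
    using P by blast
  assume "length ys = n - 1"
  then have "length (0 # ys) = n" and "0 < n"
    using P by auto
  then have "Vector_Spaces.linear sc sc (\<lambda>v. br ((0 # ys)[0 := v]))"
    using P by blast
  then show "Vector_Spaces.linear sc sc (\<lambda>v. br (v # ys))"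
    by simp
qed

context
  fixes sc :: "'k::field \<Rightarrow> 'v::ab_group_add \<Rightarrow> 'v"
    and mul :: "'v \<Rightarrow> 'v \<Rightarrow> 'v" and br :: "'v list \<Rightarrow> 'v" and n :: nat
  assumes P: "poisson_nlie sc n mul br"
begin

lemma poisson_nlie_linear_mul_shift: "Vector_Spaces.linear sc sc (\<lambda>z. mul a z - sc l z)"
proof -
  interpret vector_space_pair sc sc
    using poisson_nlie_vector_space[OF P] by (simp add: vector_space_pair_def)
  show ?thesis
    using poisson_nlie_linear_mul[OF P] vs1.linear_scale_self
    by (intro linear_compose_sub) auto
qed

lemma poisson_nlie_mul_shift_mul: "mul a (mul y x) - sc l (mul y x) = mul y (mul a x - sc l x)"
proof -
  have hom: "module_hom sc sc (mul y)"
    using poisson_nlie_linear_mul[OF P] by (simp add: module_hom_iff_linear)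
  have "mul a (mul y x) = mul y (mul a x)"
    using poisson_nlie_mul_assoc[OF P] poisson_nlie_mul_commute[OF P] by metis
  then show ?thesis
    using module_hom.diff[OF hom] module_hom.scale[OF hom] by simp
qed

lemma poisson_nlie_mul_zero: "mul x 0 = 0"
  using poisson_nlie_linear_mul[OF P, of x] module_hom.zero[of sc sc "mul x"]
  by (simp add: module_hom_iff_linear)

lemma poisson_nlie_bracket_zero: "length ys = n - 1 \<Longrightarrow> br (0 # ys) = 0"
  using poisson_nlie_linear_bracket[OF P, of ys] module_hom.zero[of sc sc "\<lambda>v. br (v # ys)"]
  by (simp add: module_hom_iff_linear)

lemma poisson_nlie_bracket_mul_shift:
  assumes "length ys = n - 1"
  shows "br ((mul a z - sc l z) # ys)
    = (mul a (br (z # ys)) - sc l (br (z # ys))) + mul (br (a # ys)) z"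
proof -
  have hom: "module_hom sc sc (\<lambda>v. br (v # ys))"
    using poisson_nlie_linear_bracket[OF P assms] by (simp add: module_hom_iff_linear)
  have "br ((mul a z - sc l z) # ys) = br (mul a z # ys) - sc l (br (z # ys))"
    using module_hom.diff[OF hom] module_hom.scale[OF hom] by simp
  also have "\<dots> = mul a (br (z # ys)) + mul z (br (a # ys)) - sc l (br (z # ys))"
    using poisson_nlie_leibniz[OF P assms] by simp
  finally show ?thesis
    using poisson_nlie_mul_commute[OF P] by (simp add: algebra_simps)
qed

end

theorem proposition5p21:
  fixes sc :: "'k::field \<Rightarrow> 'v::ab_group_add \<Rightarrow> 'v"
    and mul :: "'v \<Rightarrow> 'v \<Rightarrow> 'v" and br :: "'v list \<Rightarrow> 'v"
    and n :: nat and a :: 'v and l :: 'k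
  assumes "poisson_nlie sc n mul br"
  shows "pn_ideal sc n mul br (gen_eigenspace sc mul a l)"
proof -
  define T where "T = (\<lambda>z. mul a z - sc l z)"
  have T: "Vector_Spaces.linear sc sc T"
    unfolding T_def using poisson_nlie_linear_mul_shift[OF assms] .
  have T_mul: "T (mul y x) = mul y (T x)" for x y
    unfolding T_def using poisson_nlie_mul_shift_mul[OF assms] .
  have eigenspace: "gen_eigenspace sc mul a l = gen_kernel T"
    unfolding gen_eigenspace_def gen_kernel_def T_def ..
  show ?thesis
    unfolding pn_ideal_def eigenspace
  proof (intro conjI ballI allI impI)
    show "module.subspace sc (gen_kernel T)"
      using subspace_gen_kernel[OF T] .
  next
    fix x y assume "x \<in> gen_kernel T"
    then show "mul y x \<in> gen_kernel T"
      using gen_kernel_closed_commuting[of T "mul y"] T_mul poisson_nlie_mul_zero[OF assms] by blast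
  next
    fix x and ys :: "'v list" assume x: "x \<in> gen_kernel T" and ys: "length ys = n - 1"
    show "br (x # ys) \<in> gen_kernel T"
    proof (rule gen_kernel_closed_commutator[OF T,
          where d = "\<lambda>v. br (v # ys)" and c = "mul (br (a # ys))",
          OF poisson_nlie_bracket_zero[OF assms ys] _ T_mul x])
      show "br (T z # ys) = T (br (z # ys)) + mul (br (a # ys)) z" for z
        unfolding T_def by (rule poisson_nlie_bracket_mul_shift[OF assms ys])
    qed
  qed
qed

end
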